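(* Let $\alpha:=\int_{\Omega}\frac{dx}{p(x)}$ and $e:=\exp(1)$. If $\alpha e<m<l$, then \[ \Vert u\Vert_{mp(x)}\leq\Vert u\Vert_{lp(x)}\quad\forall\,u\in L^{lp(x)}(\Omega). \]
   Context: $\Omega\subset\mathbb{R}^N$ is a bounded domain; $p\in C^{1}(\overline{\Omega})$ with $1<\inf p\le\sup p<\infty$. For a continuous exponent $r$, $\Vert u\Vert_{r(x)}=\inf\{\gamma>0:\int_{\Omega}|u/\gamma|^{r(x)}\frac{dx}{r(x)}\leq1\}$ (Luxemburg norm), and $L^{r(x)}(\Omega)$ is the space of measurable $u$ with $\int_\Omega|u|^{r(x)}dx<\infty$. *)

theory Defs
  imports "HOL-Analysis.Analysis"
begin

definition lux_norm :: "'a::euclidean_space set \<Rightarrow> ('a \<Rightarrow> real) \<Rightarrow> ('a \<Rightarrow> real) \<Rightarrow> real" where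
  "lux_norm \<Omega> r u = Inf {\<gamma>::real. \<gamma> > 0 \<and>
      (\<integral>\<^sup>+ x\<in>\<Omega>. ennreal (\<bar>u x / \<gamma>\<bar> powr r x / r x) \<partial>lebesgue) \<le> 1}"

definition var_Lp :: "'a::euclidean_space set \<Rightarrow> ('a \<Rightarrow> real) \<Rightarrow> ('a \<Rightarrow> real) set" where
  "var_Lp \<Omega> r = {u. set_borel_measurable lebesgue \<Omega> u \<and>
      (\<integral>\<^sup>+ x\<in>\<Omega>. ennreal (\<bar>u x\<bar> powr r x) \<partial>lebesgue) < \<infinity>}"

definition C1_closure :: "'a::euclidean_space set \<Rightarrow> ('a \<Rightarrow> real) \<Rightarrow> bool" where
  "C1_closure \<Omega> p \<longleftrightarrow> continuous_on (closure \<Omega>) p \<and>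
     (\<exists>g. continuous_on (closure \<Omega>) g \<and>
          (\<forall>x\<in>\<Omega>. (p has_derivative (\<lambda>h. g x \<bullet> h)) (at x)))"

end

theory Submission
  imports Defs
begin

text \<open>Write \<open>\<rho>\<^sub>r(v) = \<integral>\<^sub>\<Omega> |v|^(r p) / (r p)\<close> and \<open>a = m / l\<close>. The tangent-line bound
  \<open>w^a \<le> c^(a - 1) (a w + (1 - a) c)\<close> of the concave map \<open>w \<mapsto> w^a\<close>, applied to
  \<open>w = |v|^(l p)\<close> and divided by \<open>m p\<close>, gives \<open>\<rho>\<^sub>m(v) \<le> c^(a - 1) (\<rho>\<^sub>l(v) + (1 - a) c \<alpha> / m)\<close>
  for every \<open>c > 0\<close>. For \<open>c = l / \<alpha>\<close> and \<open>\<rho>\<^sub>l(v) \<le> 1\<close> the right-hand side is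
  \<open>(l / \<alpha>)^(m / l) \<alpha> / m\<close>, which is at most \<open>1\<close> because \<open>ln x / x\<close> decreases on \<open>[e, \<infinity>)\<close>
  and \<open>e < m / \<alpha> < l / \<alpha>\<close>. So every \<open>\<gamma>\<close> admissible in the Luxemburg norm for the exponent
  \<open>l p\<close> is admissible for \<open>m p\<close>.\<close>

lemma powr_le_tangent:
  fixes w c a :: real
  assumes "0 \<le> w" "0 < c" "0 < a" "a < 1"
  shows "w powr a \<le> c powr (a - 1) * (a * w + (1 - a) * c)"
proof (cases "w = 0")
  case True
  then show ?thesis using assms by simp
next
  case False
  then have "w powr a * c powr (1 - a) \<le> a * w + (1 - a) * c"
    using Youngs_inequality_0[of a "1 - a" w c] assms by simp
  then have "c powr (a - 1) * (w powr a * c powr (1 - a)) \<le> c powr (a - 1) * (a * w + (1 - a) * c)"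
    by (simp add: mult_left_mono)
  moreover have "c powr (a - 1) * (w powr a * c powr (1 - a)) = w powr a"
    using assms by (simp add: powr_add[symmetric] mult.left_commute)
  ultimately show ?thesis by simp
qed

lemma powr_div_le_of_exp_le:
  fixes s t :: real
  assumes "exp 1 \<le> t" "t \<le> s"
  shows "s powr (t / s) \<le> t"
proof -
  have t0: "0 < t" using assms(1) exp_gt_zero by (meson less_le_trans)
  then have s0: "0 < s" using assms(2) by linarith
  have "ln s / s \<le> ln t / t" using ln_x_over_x_mono[OF assms] .
  then have "t / s * ln s \<le> ln t" using s0 t0 by (simp add: field_simps)
  then have "exp (t / s * ln s) \<le> exp (ln t)" by simp
  then show ?thesis using s0 t0 by (simp add: powr_def mult.commute)
qed

lemma powr_exponent_ratio_le_tangent: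
  fixes y q m l c :: real
  assumes "0 \<le> y" "0 < q" "0 < m" "m < l" "0 < c"
  shows "y powr (m * q) / (m * q)
    \<le> c powr (m / l - 1) * (y powr (l * q) / (l * q) + (1 - m / l) * c / m * (1 / q))"
proof -
  define w where "w = y powr (l * q)"
  have "w powr (m / l) = y powr (m * q)"
    unfolding w_def powr_powr using assms(3,4) by (simp add: mult.commute)
  then have "y powr (m * q) / (m * q)
      \<le> c powr (m / l - 1) * (m / l * w + (1 - m / l) * c) / (m * q)"
    using powr_le_tangent[of w c "m / l"] assms by (simp add: w_def divide_right_mono)
  also have "\<dots> = c powr (m / l - 1) * (w / (l * q) + (1 - m / l) * c / m * (1 / q))"
    using assms by (simp add: field_simps)
  finally show ?thesis unfolding w_def .
qed

lemma tangent_constant_le_1: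
  fixes \<beta> m l :: real
  assumes "0 < \<beta>" "\<beta> * exp 1 < m" "m < l"
  shows "(l / \<beta>) powr (m / l - 1) * (1 + (1 - m / l) * (l / \<beta>) / m * \<beta>) \<le> 1"
proof -
  have m: "0 < m" using assms(1,2) by (smt (verit) exp_gt_zero mult_pos_pos)
  have "(l / \<beta>) powr ((m / \<beta>) / (l / \<beta>)) \<le> m / \<beta>"
    using assms by (intro powr_div_le_of_exp_le) (auto simp: field_simps divide_strict_right_mono)
  then have "(l / \<beta>) powr (m / l) * (\<beta> / l) * (l / m) \<le> 1"
    using assms m by (simp add: field_simps)
  moreover have "1 + (1 - m / l) * (l / \<beta>) / m * \<beta> = l / m"
    using assms m by (simp add: field_simps)
  moreover have "(l / \<beta>) powr (m / l - 1) = (l / \<beta>) powr (m / l) * (\<beta> / l)"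
    using assms m by (simp add: powr_diff)
  ultimately show ?thesis by (simp only:)
qed

lemma abs_div_powr_le:
  fixes y \<gamma> \<rho> r :: real
  assumes "1 \<le> \<gamma>" "0 < \<rho>" "\<rho> \<le> r"
  shows "\<bar>y / \<gamma>\<bar> powr r / r \<le> \<bar>y\<bar> powr r / (\<gamma> powr \<rho> * \<rho>)"
proof -
  have "\<gamma> powr \<rho> * \<rho> \<le> \<gamma> powr r * r"
    using assms by (intro mult_mono powr_mono) auto
  moreover have "0 < \<gamma> powr \<rho> * \<rho>" using assms by simp
  ultimately have "\<bar>y\<bar> powr r / (\<gamma> powr r * r) \<le> \<bar>y\<bar> powr r / (\<gamma> powr \<rho> * \<rho>)"
    by (intro divide_left_mono) auto
  then show ?thesis using assms(1) by (simp add: powr_divide abs_divide)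
qed

lemma nn_integral_le_linear_combination:
  fixes M :: "'a measure" and f g h :: "'a \<Rightarrow> real" and C D G H :: real
  assumes [measurable]: "g \<in> borel_measurable M" "h \<in> borel_measurable M"
    and coeffs: "0 \<le> C" "0 \<le> D" "0 \<le> G" "0 \<le> H"
    and nonneg: "\<And>x. x \<in> space M \<Longrightarrow> 0 \<le> g x" "\<And>x. x \<in> space M \<Longrightarrow> 0 \<le> h x"
    and bound: "\<And>x. x \<in> space M \<Longrightarrow> f x \<le> C * g x + D * h x"
    and G: "(\<integral>\<^sup>+x. ennreal (g x) \<partial>M) \<le> ennreal G"
    and H: "(\<integral>\<^sup>+x. ennreal (h x) \<partial>M) \<le> ennreal H"
  shows "(\<integral>\<^sup>+x. ennreal (f x) \<partial>M) \<le> ennreal (C * G + D * H)"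
proof -
  have "(\<integral>\<^sup>+x. ennreal (f x) \<partial>M) \<le> (\<integral>\<^sup>+x. ennreal C * ennreal (g x) + ennreal D * ennreal (h x) \<partial>M)"
  proof (rule nn_integral_mono)
    fix x assume x: "x \<in> space M"
    have "ennreal (f x) \<le> ennreal (C * g x + D * h x)" using bound[OF x] by (rule ennreal_leI)
    also have "\<dots> = ennreal C * ennreal (g x) + ennreal D * ennreal (h x)"
      using coeffs nonneg[OF x] by (simp only: ennreal_plus mult_nonneg_nonneg ennreal_mult)
    finally show "ennreal (f x) \<le> ennreal C * ennreal (g x) + ennreal D * ennreal (h x)" .
  qed
  also have "\<dots> = ennreal C * (\<integral>\<^sup>+x. ennreal (g x) \<partial>M) + ennreal D * (\<integral>\<^sup>+x. ennreal (h x) \<partial>M)"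
    by (simp add: nn_integral_add nn_integral_cmult)
  also have "\<dots> \<le> ennreal C * ennreal G + ennreal D * ennreal H"
    using add_mono[OF mult_left_mono[OF G] mult_left_mono[OF H]] by simp
  also have "\<dots> = ennreal (C * G + D * H)"
    using coeffs by (simp only: ennreal_plus mult_nonneg_nonneg ennreal_mult)
  finally show ?thesis .
qed

lemma nn_integral_modular_le_1_mono:
  fixes M :: "'a measure" and q v :: "'a \<Rightarrow> real" and \<alpha> m l :: real
  assumes [measurable]: "v \<in> borel_measurable M" "q \<in> borel_measurable M"
    and q_pos: "\<And>x. x \<in> space M \<Longrightarrow> 0 < q x"
    and \<alpha>: "(\<integral>\<^sup>+x. ennreal (1 / q x) \<partial>M) \<le> ennreal \<alpha>" "0 \<le> \<alpha>" "\<alpha> * exp 1 < m"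
    and "m < l"
    and modular_l: "(\<integral>\<^sup>+x. ennreal (\<bar>v x\<bar> powr (l * q x) / (l * q x)) \<partial>M) \<le> 1"
  shows "(\<integral>\<^sup>+x. ennreal (\<bar>v x\<bar> powr (m * q x) / (m * q x)) \<partial>M) \<le> 1"
proof -
  \<comment> \<open>\<open>\<alpha>\<close> may be \<open>0\<close>, so the tangent point \<open>l / \<alpha>\<close> is replaced by \<open>l / \<beta>\<close> for some
    \<open>\<beta> \<ge> \<alpha>\<close> with \<open>0 < \<beta>\<close> and still \<open>\<beta> e < m\<close>.\<close>
  define \<beta> where "\<beta> = (\<alpha> + m / exp 1) / 2"
  have "0 \<le> \<alpha> * exp 1" using \<alpha>(2) by simp
  then have \<beta>: "0 < \<beta>" "\<alpha> \<le> \<beta>" "\<beta> * exp 1 < m"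
    using \<alpha>(3) unfolding \<beta>_def by (auto simp: field_simps)
  have m: "0 < m" using \<beta> by (smt (verit) exp_gt_zero mult_pos_pos)
  define C where "C = (l / \<beta>) powr (m / l - 1)"
  define k where "k = (1 - m / l) * (l / \<beta>) / m"
  have C: "0 \<le> C" and k: "0 \<le> k" unfolding C_def k_def using m \<beta> \<open>m < l\<close> by auto
  have "(\<integral>\<^sup>+x. ennreal (\<bar>v x\<bar> powr (m * q x) / (m * q x)) \<partial>M) \<le> ennreal (C * 1 + C * k * \<beta>)"
  proof (rule nn_integral_le_linear_combination[OF _ _ C mult_nonneg_nonneg[OF C k] _ less_imp_le[OF \<beta>(1)]])
    fix x assume x: "x \<in> space M"
    show "\<bar>v x\<bar> powr (m * q x) / (m * q x)
        \<le> C * (\<bar>v x\<bar> powr (l * q x) / (l * q x)) + C * k * (1 / q x)"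
      using powr_exponent_ratio_le_tangent[of "\<bar>v x\<bar>" "q x" m l "l / \<beta>"] q_pos[OF x] m \<beta> \<open>m < l\<close>
      by (simp add: C_def k_def distrib_left)
    show "0 \<le> \<bar>v x\<bar> powr (l * q x) / (l * q x)" "0 \<le> 1 / q x"
      using m \<open>m < l\<close> q_pos[OF x] by auto
  qed (use modular_l order_trans[OF \<alpha>(1) ennreal_leI[OF \<beta>(2)]] in simp_all)
  also have "\<dots> \<le> 1"
  proof -
    have "C * 1 + C * k * \<beta> = (l / \<beta>) powr (m / l - 1) * (1 + (1 - m / l) * (l / \<beta>) / m * \<beta>)"
      unfolding C_def k_def by (simp add: distrib_left mult.assoc)
    then have "C * 1 + C * k * \<beta> \<le> 1" using tangent_constant_le_1[OF \<beta>(1,3) \<open>m < l\<close>] by simp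
    then show ?thesis by (simp only: ennreal_le_1)
  qed
  finally show ?thesis .
qed

lemma nn_integral_modular_le_1_exists:
  fixes M :: "'a measure" and r v :: "'a \<Rightarrow> real" and \<rho> :: real
  assumes [measurable]: "v \<in> borel_measurable M" "r \<in> borel_measurable M"
    and "0 < \<rho>" and r_ge: "\<And>x. x \<in> space M \<Longrightarrow> \<rho> \<le> r x"
    and finite: "(\<integral>\<^sup>+x. ennreal (\<bar>v x\<bar> powr r x) \<partial>M) < \<infinity>"
  shows "\<exists>\<gamma>>0. (\<integral>\<^sup>+x. ennreal (\<bar>v x / \<gamma>\<bar> powr r x / r x) \<partial>M) \<le> 1"
proof -
  define K where "K = enn2real (\<integral>\<^sup>+x. ennreal (\<bar>v x\<bar> powr r x) \<partial>M)"
  have K: "(\<integral>\<^sup>+x. ennreal (\<bar>v x\<bar> powr r x) \<partial>M) = ennreal K" "0 \<le> K"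
    unfolding K_def using finite by (auto simp: less_top[symmetric])
  define G where "G = max 1 (K / \<rho>)"
  define \<gamma> where "\<gamma> = G powr (1 / \<rho>)"
  have "1 \<le> G" "K / \<rho> \<le> G" unfolding G_def by simp_all
  then have G: "1 \<le> G" "K \<le> G * \<rho>" using \<open>0 < \<rho>\<close> by (simp_all add: field_simps)
  have \<gamma>: "1 \<le> \<gamma>" "\<gamma> powr \<rho> = G"
    unfolding \<gamma>_def powr_powr using \<open>0 < \<rho>\<close> G(1) by (auto simp: ge_one_powr_ge_zero)
  have pointwise: "\<bar>v x / \<gamma>\<bar> powr r x / r x \<le> \<bar>v x\<bar> powr r x / (G * \<rho>)"
    if "x \<in> space M" for x
    using abs_div_powr_le[OF \<gamma>(1) \<open>0 < \<rho>\<close> r_ge[OF that]] \<gamma>(2) by simp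
  have "(\<integral>\<^sup>+x. ennreal (\<bar>v x / \<gamma>\<bar> powr r x / r x) \<partial>M)
      \<le> (\<integral>\<^sup>+x. ennreal (1 / (G * \<rho>)) * ennreal (\<bar>v x\<bar> powr r x) \<partial>M)"
    using pointwise G(1) \<open>0 < \<rho>\<close>
    by (intro nn_integral_mono) (simp add: ennreal_mult[symmetric] ennreal_leI)
  also have "\<dots> = ennreal (1 / (G * \<rho>)) * ennreal K"
    using nn_integral_cmult[of "\<lambda>x. ennreal (\<bar>v x\<bar> powr r x)" M] K(1) by simp
  also have "\<dots> = ennreal (K / (G * \<rho>))"
    using K(2) G(1) \<open>0 < \<rho>\<close> by (simp add: ennreal_mult[symmetric])
  also have "\<dots> \<le> 1" using G \<open>0 < \<rho>\<close> by (simp add: ennreal_le_1 field_simps)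
  finally show ?thesis using \<gamma>(1) by (intro exI[of _ \<gamma>]) auto
qed

lemma lux_norm_mono_exponent:
  assumes "\<Omega> \<in> sets lebesgue"
    and "\<And>\<gamma>. 0 < \<gamma> \<Longrightarrow>
      (\<integral>\<^sup>+x. ennreal (\<bar>u x / \<gamma>\<bar> powr s x / s x) \<partial>lebesgue_on \<Omega>) \<le> 1 \<Longrightarrow>
      (\<integral>\<^sup>+x. ennreal (\<bar>u x / \<gamma>\<bar> powr r x / r x) \<partial>lebesgue_on \<Omega>) \<le> 1"
    and "\<exists>\<gamma>>0. (\<integral>\<^sup>+x. ennreal (\<bar>u x / \<gamma>\<bar> powr s x / s x) \<partial>lebesgue_on \<Omega>) \<le> 1"
  shows "lux_norm \<Omega> r u \<le> lux_norm \<Omega> s u"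
proof -
  have restrict: "(\<integral>\<^sup>+x\<in>\<Omega>. f x \<partial>lebesgue) = (\<integral>\<^sup>+x. f x \<partial>lebesgue_on \<Omega>)" for f
    using assms(1) by (subst nn_integral_restrict_space) auto
  show ?thesis
    unfolding lux_norm_def restrict
  proof (rule cInf_mono)
    show "{\<gamma>. 0 < \<gamma> \<and> (\<integral>\<^sup>+x. ennreal (\<bar>u x / \<gamma>\<bar> powr s x / s x) \<partial>lebesgue_on \<Omega>) \<le> 1} \<noteq> {}"
      using assms(3) by auto
    show "bdd_below {\<gamma>. 0 < \<gamma> \<and> (\<integral>\<^sup>+x. ennreal (\<bar>u x / \<gamma>\<bar> powr r x / r x) \<partial>lebesgue_on \<Omega>) \<le> 1}"
      by (rule bdd_belowI[of _ 0]) auto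
  qed (use assms(2) in auto)
qed

lemma nn_integral_inverse_eq_set_integral:
  fixes p :: "'a::euclidean_space \<Rightarrow> real"
  assumes "\<Omega> \<in> sets lebesgue" "emeasure lebesgue \<Omega> < \<infinity>"
    and [measurable]: "p \<in> borel_measurable (lebesgue_on \<Omega>)"
    and p_ge: "\<And>x. x \<in> \<Omega> \<Longrightarrow> 1 \<le> p x"
  shows "(\<integral>\<^sup>+x. ennreal (1 / p x) \<partial>lebesgue_on \<Omega>) = ennreal (LINT x:\<Omega>|lebesgue. 1 / p x)"
    and "0 \<le> (LINT x:\<Omega>|lebesgue. 1 / p x)"
proof -
  have integrable: "integrable (lebesgue_on \<Omega>) (\<lambda>x. 1 / p x)"
  proof (rule integrableI_bounded_set[where A=\<Omega> and B=1])
    show "emeasure (lebesgue_on \<Omega>) \<Omega> < \<infinity>"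
      using assms(1,2) by (simp add: emeasure_restrict_space)
    show "AE x in lebesgue_on \<Omega>. x \<in> \<Omega> \<longrightarrow> norm (1 / p x) \<le> 1"
      using p_ge by (intro AE_I2) (auto dest!: p_ge)
  qed (auto simp: space_restrict_space)
  have nonneg: "AE x in lebesgue_on \<Omega>. 0 \<le> 1 / p x"
    using p_ge by (intro AE_I2) (force simp: space_restrict_space)
  have "integral\<^sup>L (lebesgue_on \<Omega>) (\<lambda>x. 1 / p x) = (LINT x:\<Omega>|lebesgue. 1 / p x)"
    unfolding set_lebesgue_integral_def using assms(1) by (subst integral_restrict_space) auto
  then show "(\<integral>\<^sup>+x. ennreal (1 / p x) \<partial>lebesgue_on \<Omega>) = ennreal (LINT x:\<Omega>|lebesgue. 1 / p x)"
    and "0 \<le> (LINT x:\<Omega>|lebesgue. 1 / p x)"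
    using nn_integral_eq_integral[OF integrable nonneg] integral_nonneg_AE[OF nonneg] by simp_all
qed

lemma C1_closure_borel_measurable:
  assumes "\<Omega> \<in> sets lebesgue" "C1_closure \<Omega> p"
  shows "p \<in> borel_measurable (lebesgue_on \<Omega>)"
proof -
  have "continuous_on \<Omega> p"
    using assms(2) closure_subset continuous_on_subset unfolding C1_closure_def by blast
  then show ?thesis using assms(1) by (rule continuous_imp_measurable_on_sets_lebesgue)
qed

lemma C1_closure_bdd_below:
  assumes "bounded \<Omega>" "C1_closure \<Omega> p"
  shows "bdd_below (p ` \<Omega>)"
proof -
  have "continuous_on (closure \<Omega>) p" using assms(2) unfolding C1_closure_def by simp
  then have "compact (p ` closure \<Omega>)"
    using assms(1) by (intro compact_continuous_image) (simp_all add: compact_closure)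
  then have "bdd_below (p ` closure \<Omega>)" by (simp add: bounded_imp_bdd_below compact_imp_bounded)
  then show ?thesis by (meson bdd_below_mono closure_subset image_mono)
qed

lemma var_Lp_restrict_space:
  assumes "\<Omega> \<in> sets lebesgue" "u \<in> var_Lp \<Omega> r"
  shows "u \<in> borel_measurable (lebesgue_on \<Omega>)"
    and "(\<integral>\<^sup>+x. ennreal (\<bar>u x\<bar> powr r x) \<partial>lebesgue_on \<Omega>) < \<infinity>"
  using assms unfolding var_Lp_def set_borel_measurable_def
  by (auto simp: borel_measurable_restrict_space_iff nn_integral_restrict_space)

theorem mainTheorem13:
  fixes \<Omega> :: "'a::euclidean_space set" and p :: "'a \<Rightarrow> real" and m l :: real
  assumes "open \<Omega>" and "connected \<Omega>" and "bounded \<Omega>" and "\<Omega> \<noteq> {}"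
    and "C1_closure \<Omega> p"
    and "1 < (INF x\<in>\<Omega>. p x)" and "bdd_above (p ` \<Omega>)"
    and "(LINT x:\<Omega>|lebesgue. 1 / p x) * exp 1 < m" and "m < l"
  shows "\<forall>u \<in> var_Lp \<Omega> (\<lambda>x. l * p x).
           lux_norm \<Omega> (\<lambda>x. m * p x) u \<le> lux_norm \<Omega> (\<lambda>x. l * p x) u"
proof
  fix u assume u: "u \<in> var_Lp \<Omega> (\<lambda>x. l * p x)"
  have \<Omega>: "\<Omega> \<in> sets lebesgue" "emeasure lebesgue \<Omega> < \<infinity>"
    using lmeasurable_open[OF assms(3,1)] unfolding fmeasurable_def by auto
  have p_ge: "1 \<le> p x" if "x \<in> \<Omega>" for x
    using assms(6) cINF_lower[OF C1_closure_bdd_below[OF assms(3,5)] that] by linarith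
  have p_pos: "0 < p x" if "x \<in> space (lebesgue_on \<Omega>)" for x
    using p_ge that by (fastforce simp: space_restrict_space)
  note u_restrict = var_Lp_restrict_space[OF \<Omega>(1) u]
  note [measurable] = u_restrict(1)
  note p_meas [measurable] = C1_closure_borel_measurable[OF \<Omega>(1) assms(5)]
  note \<alpha> = nn_integral_inverse_eq_set_integral[OF \<Omega> p_meas p_ge]
  have "0 \<le> (LINT x:\<Omega>|lebesgue. 1 / p x) * exp 1" using \<alpha>(2) by simp
  then have "0 < l" using assms(8,9) by linarith
  show "lux_norm \<Omega> (\<lambda>x. m * p x) u \<le> lux_norm \<Omega> (\<lambda>x. l * p x) u"
  proof (rule lux_norm_mono_exponent[OF \<Omega>(1)])
    show "(\<integral>\<^sup>+x. ennreal (\<bar>u x / \<gamma>\<bar> powr (m * p x) / (m * p x)) \<partial>lebesgue_on \<Omega>) \<le> 1"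
      if "(\<integral>\<^sup>+x. ennreal (\<bar>u x / \<gamma>\<bar> powr (l * p x) / (l * p x)) \<partial>lebesgue_on \<Omega>) \<le> 1" for \<gamma>
      by (rule nn_integral_modular_le_1_mono[OF _ p_meas p_pos
          \<alpha>(1)[THEN eq_refl] \<alpha>(2) assms(8,9) that]) measurable
    show "\<exists>\<gamma>>0. (\<integral>\<^sup>+x. ennreal (\<bar>u x / \<gamma>\<bar> powr (l * p x) / (l * p x)) \<partial>lebesgue_on \<Omega>) \<le> 1"
      using u_restrict \<open>0 < l\<close> p_ge p_meas
      by (intro nn_integral_modular_le_1_exists[where \<rho> = l]) (auto simp: space_restrict_space)
  qed
qed

end
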